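(* Let $f:\mathbb Z^+\to[0,\infty)$ be nondecreasing with $f(0)=0$ and $f(z)>0$ for $z>0$, and let $\mathcal H(\varrho)=\mathbf E^\varrho f(\omega)$ for $\varrho\in(0,\infty)$. If $f$ is convex (respectively concave), then $\mathcal H$ is convex (respectively concave) on $(0,\infty)$. Moreover, in this case $\mathcal H''(\varrho)>0$ (respectively $\mathcal H''(\varrho)<0$) for all $\varrho>0$ if and only if $f$ is not a linear function.
   Context: Set $f(0)!=1$, $f(z)!=\prod_{y=1}^zf(y)$. Let $\bar\theta=\lim_{z\to\infty}\log f(z)$ (assumed $>-\infty$, automatically true here). For $\theta<\bar\theta$, $Z(\theta)=\sum_{z\ge0}e^{\theta z}/f(z)!<\infty$ and $\mu^\theta(z)=e^{\theta z}/(Z(\theta)f(z)!)$, $z\in\mathbb Z^+$. The mean $\varrho(\theta)=\sum_zz\mu^\theta(z)$ is a strictly increasing bijection onto $(0,\infty)$; $\mathbf E^\varrho$ denotes expectation of $\omega\sim\mu^{\theta(\varrho)}$. ($\mathcal H$ is the hydrodynamic flux of the totally asymmetric zero range process with jump rate $f$.) *)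

theory Defs
  imports "HOL-Analysis.Analysis"
begin

definition ffact :: "(nat \<Rightarrow> real) \<Rightarrow> nat \<Rightarrow> real" where
  "ffact f z = (\<Prod>y\<in>{1..z}. f y)"

definition theta_bar :: "(nat \<Rightarrow> real) \<Rightarrow> ereal" where
  "theta_bar f = lim (\<lambda>z. ereal (ln (f z)))"

definition Zpart :: "(nat \<Rightarrow> real) \<Rightarrow> real \<Rightarrow> real" where
  "Zpart f \<theta> = (\<Sum>z. exp (\<theta> * real z) / ffact f z)"

definition mu :: "(nat \<Rightarrow> real) \<Rightarrow> real \<Rightarrow> nat \<Rightarrow> real" where
  "mu f \<theta> z = exp (\<theta> * real z) / (Zpart f \<theta> * ffact f z)"

definition rho :: "(nat \<Rightarrow> real) \<Rightarrow> real \<Rightarrow> real" where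
  "rho f \<theta> = (\<Sum>z. real z * mu f \<theta> z)"

definition theta_of :: "(nat \<Rightarrow> real) \<Rightarrow> real \<Rightarrow> real" where
  "theta_of f \<rho> = (THE \<theta>. ereal \<theta> < theta_bar f \<and> rho f \<theta> = \<rho>)"

definition flux :: "(nat \<Rightarrow> real) \<Rightarrow> real \<Rightarrow> real" where
  "flux f \<rho> = (\<Sum>z. f z * mu f (theta_of f \<rho>) z)"

definition convex_seq :: "(nat \<Rightarrow> real) \<Rightarrow> bool" where
  "convex_seq f \<longleftrightarrow> (\<forall>z. f (z+1) - f z \<le> f (z+2) - f (z+1))"

definition concave_seq :: "(nat \<Rightarrow> real) \<Rightarrow> bool" where
  "concave_seq f \<longleftrightarrow> (\<forall>z. f (z+1) - f z \<ge> f (z+2) - f (z+1))"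

definition linear_seq :: "(nat \<Rightarrow> real) \<Rightarrow> bool" where
  "linear_seq f \<longleftrightarrow> (\<exists>a b. \<forall>z. f z = a * real z + b)"

end

theory Submission
  imports Defs
begin

text \<open>Write \<open>x = e\<^sup>\<theta>\<close> for the fugacity. Stein's identity \<open>E[f(\<omega>) g(\<omega>)] = x E[g(\<omega> + 1)]\<close>
  with \<open>g = 1\<close> gives \<open>H(\<rho>) = x\<close>, so \<open>H\<close> is the inverse of the density \<open>x \<mapsto> E \<omega>\<close>. Differentiating
  twice, \<open>H''(\<rho>)\<close> is a positive multiple of \<open>E[f(\<omega>) q(\<omega>)]\<close>, where \<open>q\<close> is the monic quadratic
  orthogonal to \<open>1\<close> and \<open>\<omega>\<close> under \<open>\<mu>\<^sup>\<theta>\<close>. Such a \<open>q\<close> is negative somewhere, so there are integers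
  \<open>u < v\<close> such that \<open>q\<close> has the sign of \<open>(n - u)(n - v)\<close> on \<open>\<nat>\<close>; a convex \<open>f\<close> minus its chord
  through \<open>u\<close> and \<open>v\<close> has this sign too. Orthogonality removes the chord, hence \<open>E[f q] \<ge> 0\<close>, with
  equality only if \<open>f\<close> coincides with its chord.\<close>

section \<open>Convex sequences against orthogonal quadratics\<close>

lemma convex_seq_diff_mono:
  assumes "convex_seq h" "i \<le> j"
  shows "h (Suc i) - h i \<le> h (Suc j) - h j"
  using assms(2)
proof (induction j rule: dec_induct)
  case (step j)
  have "h (j+1) - h j \<le> h (j+2) - h (j+1)" using assms(1) unfolding convex_seq_def by blast
  then show ?case using step by (simp add: numeral_2_eq_2)
qed simp

lemma convex_seq_below_chord:
  assumes "convex_seq h" "a \<le> b" "b \<le> c"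
  shows "(real c - real a) * h b \<le> (real c - real b) * h a + (real b - real a) * h c"
proof -
  define d where "d = h (Suc b) - h b"
  have "h b - h a = (\<Sum>i=a..<b. h (Suc i) - h i)" using sum_Suc_diff'[OF assms(2), of h] by simp
  also have "\<dots> \<le> (\<Sum>i=a..<b. d)"
    by (rule sum_mono) (use convex_seq_diff_mono[OF assms(1)] d_def in auto)
  finally have left: "h b - h a \<le> (real b - real a) * d" using assms(2) by (simp add: of_nat_diff)
  have "(\<Sum>i=b..<c. d) \<le> (\<Sum>i=b..<c. h (Suc i) - h i)"
    by (rule sum_mono) (use convex_seq_diff_mono[OF assms(1)] d_def in auto)
  also have "\<dots> = h c - h b" using sum_Suc_diff'[OF assms(3), of h] by simp
  finally have right: "(real c - real b) * d \<le> h c - h b" using assms(3) by (simp add: of_nat_diff)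
  have "(real c - real b) * (h b - h a) \<le> (real c - real b) * ((real b - real a) * d)"
    using left assms by (intro mult_left_mono) auto
  also have "\<dots> = (real b - real a) * ((real c - real b) * d)" by simp
  also have "\<dots> \<le> (real b - real a) * (h c - h b)"
    using right assms by (intro mult_left_mono) auto
  finally show ?thesis by (simp add: algebra_simps)
qed

text \<open>The first factor is \<open>v - u\<close> times the height of \<open>h z\<close> above the chord through \<open>u\<close> and \<open>v\<close>:
  \<open>h\<close> lies below the chord between \<open>u\<close> and \<open>v\<close> and above it outside.\<close>

lemma convex_seq_chord_sign:
  assumes h: "convex_seq h" and "u < v"
  shows "0 \<le> ((real v - real u) * h z - (real v - real z) * h u - (real z - real u) * h v)
              * ((real z - real u) * (real z - real v))"
proof -
  define G where "G = (real v - real u) * h z - (real v - real z) * h u - (real z - real u) * h v"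
  consider "z \<le> u" | "u \<le> z" "z \<le> v" | "v \<le> z" by linarith
  then show ?thesis
  proof cases
    case 1
    hence "(real v - real z) * h u \<le> (real v - real u) * h z + (real u - real z) * h v"
      using convex_seq_below_chord[OF h 1, of v] \<open>u < v\<close> by simp
    hence "0 \<le> G" by (simp add: G_def algebra_simps)
    moreover have "0 \<le> (real z - real u) * (real z - real v)"
      using 1 \<open>u < v\<close> by (intro mult_nonpos_nonpos) auto
    ultimately show ?thesis unfolding G_def by simp
  next
    case 2
    hence "(real v - real u) * h z \<le> (real v - real z) * h u + (real z - real u) * h v"
      using convex_seq_below_chord[OF h] by simp
    hence "G \<le> 0" by (simp add: G_def algebra_simps)
    moreover have "(real z - real u) * (real z - real v) \<le> 0"
      using 2 by (intro mult_nonneg_nonpos) auto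
    ultimately show ?thesis unfolding G_def by (rule mult_nonpos_nonpos)
  next
    case 3
    hence "(real z - real u) * h v \<le> (real z - real v) * h u + (real v - real u) * h z"
      using convex_seq_below_chord[OF h, of u v z] \<open>u < v\<close> by simp
    hence "0 \<le> G" by (simp add: G_def algebra_simps)
    moreover have "0 \<le> (real z - real u) * (real z - real v)"
      using 3 \<open>u < v\<close> by (intro mult_nonneg_nonneg) auto
    ultimately show ?thesis unfolding G_def by simp
  qed
qed

lemma convex_seq_scale_minus_affine:
  assumes "convex_seq h" "0 \<le> c"
  shows "convex_seq (\<lambda>n. c * h n - (A + B * real n))"
  unfolding convex_seq_def
proof
  fix z
  have "c * (h (z+1) - h z) \<le> c * (h (z+2) - h (z+1))"
    using assms unfolding convex_seq_def by (intro mult_left_mono) auto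
  thus "c * h (z+1) - (A + B * real (z+1)) - (c * h z - (A + B * real z))
      \<le> c * h (z+2) - (A + B * real (z+2)) - (c * h (z+1) - (A + B * real (z+1)))"
    by (simp add: algebra_simps)
qed

lemma concave_seq_iff_convex_seq_uminus: "concave_seq h \<longleftrightarrow> convex_seq (\<lambda>n. - h n)"
  unfolding concave_seq_def convex_seq_def by (intro iff_allI) linarith

lemma linear_seq_uminus: "linear_seq h \<Longrightarrow> linear_seq (\<lambda>n. - h n)"
  unfolding linear_seq_def by (metis minus_add_distrib mult_minus_left)

lemma convex_seq_eq_0_if_eventually_0:
  assumes "convex_seq g" "g 0 = 0" "\<And>n. n \<ge> N \<Longrightarrow> g n = 0"
  shows "g n = 0"
proof -
  have decr: "g (Suc k) - g k \<le> 0" for k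
    using convex_seq_diff_mono[OF assms(1), of k "max k N"] assms(3) by simp
  have "g n - g 0 = (\<Sum>i=0..<n. g (Suc i) - g i)" using sum_Suc_diff'[of 0 n g] by simp
  also have "\<dots> \<le> 0" by (rule sum_nonpos) (use decr in auto)
  finally have nonpos: "g n \<le> 0" using assms(2) by simp
  have "g (max n N) - g n = (\<Sum>i=n..<max n N. g (Suc i) - g i)"
    using sum_Suc_diff'[of n "max n N" g] by simp
  also have "\<dots> \<le> 0" by (rule sum_nonpos) (use decr in auto)
  finally have "g n \<ge> 0" using assms(3)[of "max n N"] by simp
  with nonpos show ?thesis by simp
qed

lemma sums_zero_pos_weight_imp_neg:
  fixes p q :: "nat \<Rightarrow> real"
  assumes "\<And>n. p n > 0" "(\<lambda>n. p n * q n) sums 0" "q k \<noteq> 0"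
  shows "\<exists>n. q n < 0"
proof (rule ccontr)
  assume "\<nexists>n. q n < 0"
  hence "\<And>n. 0 \<le> p n * q n" using assms(1) by (simp add: not_less less_imp_le)
  hence "\<forall>n. p n * q n = 0"
    using suminf_eq_zero_iff[OF sums_summable[OF assms(2)]] sums_unique[OF assms(2)] by simp
  thus False using assms(1)[of k] assms(3) by (metis less_irrefl mult_eq_0_iff)
qed

lemma monic_quadratic_factor:
  fixes b c r :: real
  assumes "r\<^sup>2 + b * r + c < 0"
  obtains r1 r2 where "r1 \<le> r2" "\<And>y. y\<^sup>2 + b * y + c = (y - r1) * (y - r2)"
proof -
  define d where "d = b\<^sup>2 - 4 * c"
  have "r\<^sup>2 + b * r + c = (r + b/2)\<^sup>2 - d/4" by (simp add: d_def power2_eq_square field_simps)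
  moreover have "0 \<le> (r + b/2)\<^sup>2" by simp
  ultimately have d: "d > 0" using assms by linarith
  hence "sqrt d * sqrt d = d" by simp
  hence "y\<^sup>2 + b * y + c = (y - (- b - sqrt d) / 2) * (y - (- b + sqrt d) / 2)" for y
    by (simp add: d_def power2_eq_square field_simps)
  moreover have "(- b - sqrt d) / 2 \<le> (- b + sqrt d) / 2" using d by simp
  ultimately show ?thesis using that by blast
qed

lemma quadratic_sign_bracket:
  fixes b c r :: real
  assumes "r\<^sup>2 + b * r + c < 0"
  obtains u v :: nat where "u < v"
    "\<And>z. 0 \<le> (real z - real u) * (real z - real v) * (real z ^ 2 + b * real z + c)"
proof -
  obtain r1 r2 where r12: "r1 \<le> r2" and factor: "\<And>y. y\<^sup>2 + b * y + c = (y - r1) * (y - r2)"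
    using monic_quadratic_factor[OF assms] by blast
  define u where "u = nat \<lfloor>r1\<rfloor>"
  define v where "v = max (u + 1) (nat \<lceil>r2\<rceil>)"
  have "u < v" by (simp add: v_def)
  moreover have "0 \<le> (real z - real u) * (real z - real v) * (real z ^ 2 + b * real z + c)" for z
  proof -
    consider "z < u" | "u < z" "z < v" | "v < z" | "z = u \<or> z = v" by linarith
    then show ?thesis
    proof cases
      case 1
      hence "real z < r1" unfolding u_def by linarith
      hence "0 \<le> real z ^ 2 + b * real z + c" unfolding factor using r12 by (simp add: mult_nonpos_nonpos)
      moreover have "0 \<le> (real z - real u) * (real z - real v)"
        using 1 \<open>u < v\<close> by (intro mult_nonpos_nonpos) auto
      ultimately show ?thesis by simp
    next
      case 2
      hence "r1 < real z" "real z < r2" unfolding u_def v_def by linarith+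
      hence "real z ^ 2 + b * real z + c \<le> 0" unfolding factor by (simp add: mult_nonneg_nonpos)
      moreover have "(real z - real u) * (real z - real v) \<le> 0"
        using 2 by (intro mult_nonneg_nonpos) auto
      ultimately show ?thesis by (simp add: mult_nonpos_nonpos)
    next
      case 3
      hence "r2 < real z" unfolding v_def by linarith
      hence "0 \<le> real z ^ 2 + b * real z + c" unfolding factor using r12 by simp
      moreover have "0 \<le> (real z - real u) * (real z - real v)"
        using 3 \<open>u < v\<close> by (intro mult_nonneg_nonneg) auto
      ultimately show ?thesis by simp
    qed auto
  qed
  ultimately show ?thesis using that by blast
qed

lemma quadratic_eventually_pos:
  fixes b c :: real
  obtains N where "\<And>n. n \<ge> N \<Longrightarrow> 0 < real n ^ 2 + b * real n + c"
proof
  fix n :: nat assume "nat \<lceil>\<bar>b\<bar> + \<bar>c\<bar>\<rceil> + 1 \<le> n"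
  hence n: "\<bar>b\<bar> + \<bar>c\<bar> + 1 \<le> real n" by linarith
  have "real n - \<bar>b\<bar> \<le> real n * (real n - \<bar>b\<bar>)"
    using n by (intro mult_le_cancel_right1[THEN iffD2]) auto
  also have "\<dots> = real n ^ 2 + (- \<bar>b\<bar>) * real n" by (simp add: power2_eq_square algebra_simps)
  also have "\<dots> \<le> real n ^ 2 + b * real n" by (intro add_left_mono mult_right_mono) auto
  finally show "0 < real n ^ 2 + b * real n + c" using n by linarith
qed

text \<open>A monic quadratic orthogonal to \<open>1\<close> and \<open>n\<close> does not vanish at \<open>0\<close>: otherwise
  \<open>n (n + b)\<^sup>2\<close> would be orthogonal to \<open>1\<close>.\<close>

lemma ortho_quadratic_const_ne_0:
  fixes p :: "nat \<Rightarrow> real" and b c :: real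
  defines "q \<equiv> \<lambda>n. real n ^ 2 + b * real n + c"
  assumes p: "\<And>n. p n > 0"
    and ortho0: "(\<lambda>n. p n * q n) sums 0" and ortho1: "(\<lambda>n. p n * real n * q n) sums 0"
  shows "c \<noteq> 0"
proof
  assume "c = 0"
  hence "(\<lambda>n. p n * real n * q n + b * (p n * q n)) = (\<lambda>n. p n * (real n * (real n + b)\<^sup>2))"
    by (simp add: q_def power2_eq_square algebra_simps)
  moreover have "(\<lambda>n. p n * real n * q n + b * (p n * q n)) sums 0"
    using sums_add[OF ortho1 sums_mult[OF ortho0]] by simp
  ultimately have "(\<lambda>n. p n * (real n * (real n + b)\<^sup>2)) sums 0" by simp
  moreover have "real 2 * (real 2 + b)\<^sup>2 \<noteq> 0 \<or> real 1 * (real 1 + b)\<^sup>2 \<noteq> 0" by auto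
  ultimately obtain n where "real n * (real n + b)\<^sup>2 < 0"
    using sums_zero_pos_weight_imp_neg[of p "\<lambda>n. real n * (real n + b)\<^sup>2", OF p] by blast
  thus False by (simp add: mult_less_0_iff)
qed

lemma sums_ortho_scale_minus_affine:
  fixes p q h :: "nat \<Rightarrow> real"
  assumes "(\<lambda>n. p n * q n) sums 0" "(\<lambda>n. p n * real n * q n) sums 0"
    and "summable (\<lambda>n. p n * h n * q n)"
  shows "(\<lambda>n. p n * (c * h n - (A + B * real n)) * q n) sums (c * (\<Sum>n. p n * h n * q n))"
proof -
  have "(\<lambda>n. c * (p n * h n * q n) - A * (p n * q n) - B * (p n * real n * q n))
      sums (c * (\<Sum>n. p n * h n * q n) - A * 0 - B * 0)"
    using assms by (intro sums_diff sums_mult summable_sums)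
  thus ?thesis by (simp add: algebra_simps)
qed

lemma convex_seq_chord_times_quadratic_nonneg:
  assumes h: "convex_seq h" and "u < v"
    and bracket: "\<And>z. 0 \<le> (real z - real u) * (real z - real v) * q z"
  shows "0 \<le> ((real v - real u) * h z - (real v - real z) * h u - (real z - real u) * h v) * q z"
proof (cases "z = u \<or> z = v")
  case True then show ?thesis by (auto simp: algebra_simps)
next
  case False
  define G where "G = (real v - real u) * h z - (real v - real z) * h u - (real z - real u) * h v"
  define r where "r = (real z - real u) * (real z - real v)"
  have "0 \<le> G * r" using convex_seq_chord_sign[OF h \<open>u < v\<close>, of z] by (simp add: G_def r_def)
  moreover have "0 \<le> r * q z" using bracket[of z] by (simp add: r_def)
  ultimately have "0 \<le> (G * r) * (r * q z)" by simp
  also have "\<dots> = (G * q z) * r\<^sup>2" by (simp add: power2_eq_square algebra_simps)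
  finally show ?thesis using False by (simp add: zero_le_mult_iff G_def r_def)
qed

text \<open>Discrete counterpart of the sign of \<open>\<integral> h q\<close> for convex \<open>h\<close>: subtracting from \<open>h\<close> its chord
  through two integers bracketing the roots of \<open>q\<close> changes nothing by orthogonality, and leaves a
  sequence with the sign of \<open>q\<close>.\<close>

lemma convex_seq_ortho_quadratic:
  fixes p h :: "nat \<Rightarrow> real" and b c :: real
  defines "q \<equiv> \<lambda>n. real n ^ 2 + b * real n + c"
  assumes h: "convex_seq h" and p: "\<And>n. p n > 0"
    and ortho0: "(\<lambda>n. p n * q n) sums 0" and ortho1: "(\<lambda>n. p n * real n * q n) sums 0"
    and sh: "summable (\<lambda>n. p n * h n * q n)"
  shows "0 \<le> (\<Sum>n. p n * h n * q n)" and "(\<Sum>n. p n * h n * q n) = 0 \<Longrightarrow> linear_seq h"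
proof -
  have "q 0 \<noteq> 0"
    using ortho_quadratic_const_ne_0[OF p] ortho0 ortho1 by (simp add: q_def)
  then obtain r where "q r < 0" using sums_zero_pos_weight_imp_neg[OF p ortho0] by blast
  then obtain u v where uv: "u < v" and bracket: "\<And>z. 0 \<le> (real z - real u) * (real z - real v) * q z"
    using quadratic_sign_bracket[of "real r" b c] unfolding q_def by blast
  define A where "A = real v * h u - real u * h v"
  define B where "B = h v - h u"
  define G where "G = (\<lambda>n. (real v - real u) * h n - (A + B * real n))"
  have Gq: "0 \<le> G n * q n" for n
    using convex_seq_chord_times_quadratic_nonneg[OF h uv bracket, of n]
    by (simp add: G_def A_def B_def algebra_simps)
  have sums_G: "(\<lambda>n. p n * (G n * q n)) sums ((real v - real u) * (\<Sum>n. p n * h n * q n))"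
    using sums_ortho_scale_minus_affine[OF ortho0 ortho1 sh] by (simp add: G_def mult.assoc)
  have nonneg: "0 \<le> p n * (G n * q n)" for n using p[of n] Gq[of n] by simp
  show "0 \<le> (\<Sum>n. p n * h n * q n)"
    using sums_le[OF nonneg sums_zero sums_G] uv by (simp add: zero_le_mult_iff)
  assume "(\<Sum>n. p n * h n * q n) = 0"
  hence "p n * (G n * q n) = 0" for n
    using suminf_eq_zero_iff[OF sums_summable[OF sums_G] nonneg] sums_unique[OF sums_G] by simp
  hence Gq0: "G n = 0 \<or> q n = 0" for n using p[of n] by (metis less_irrefl mult_eq_0_iff)
  obtain N where "\<And>n. n \<ge> N \<Longrightarrow> 0 < q n" using quadratic_eventually_pos unfolding q_def by blast
  moreover have "convex_seq G"
    unfolding G_def by (rule convex_seq_scale_minus_affine[OF h]) (use uv in simp)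
  ultimately have "G n = 0" for n
    using convex_seq_eq_0_if_eventually_0[of G N n] Gq0 \<open>q 0 \<noteq> 0\<close> by (metis less_irrefl)
  hence "(real v - real u) * h n = A + B * real n" for n by (simp add: G_def)
  hence "h n = (A + B * real n) / (real v - real u)" for n
    using uv by (simp add: eq_divide_eq mult.commute)
  hence "\<forall>n. h n = B / (real v - real u) * real n + A / (real v - real u)"
    by (simp add: add_divide_distrib)
  thus "linear_seq h" unfolding linear_seq_def by blast
qed

section \<open>Generating series of the stationary measures\<close>

locale zero_range_rate =
  fixes f :: "nat \<Rightarrow> real"
  assumes f_mono: "mono f" and f_0: "f 0 = 0" and f_pos: "\<And>z. z > 0 \<Longrightarrow> f z > 0"
begin

definition weight :: "nat \<Rightarrow> real" where "weight n = 1 / ffact f n"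

text \<open>\<open>Z 0 (exp \<theta>)\<close> is the partition function \<open>Z(\<theta>)\<close>, and \<open>Z k (exp \<theta>) / Z 0 (exp \<theta>)\<close> is the
  \<open>k\<close>-th moment of \<open>\<mu>\<^sup>\<theta>\<close>.\<close>

definition Z :: "nat \<Rightarrow> real \<Rightarrow> real" where "Z k x = (\<Sum>n. real n ^ k * weight n * x ^ n)"

definition fugacity :: "real \<Rightarrow> bool" where "fugacity x \<longleftrightarrow> 0 < x \<and> (\<exists>z. x < f z)"

lemma f_nonneg: "f z \<ge> 0"
  using f_pos[of z] f_0 by (cases z) auto

lemma ffact_Suc: "ffact f (Suc n) = f (Suc n) * ffact f n"
  unfolding ffact_def by (simp add: prod.nat_ivl_Suc')

lemma ffact_pos: "ffact f n > 0"
  unfolding ffact_def by (rule prod_pos) (use f_pos in auto)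

lemma weight_pos: "weight n > 0"
  using ffact_pos by (simp add: weight_def)

lemma weight_0: "weight 0 = 1"
  by (simp add: weight_def ffact_def)

lemma weight_Suc: "weight (Suc n) = weight n / f (Suc n)"
  by (simp add: weight_def ffact_Suc)

lemma f_weight_Suc: "f (Suc n) * weight (Suc n) = weight n"
  using f_pos[of "Suc n"] by (simp add: weight_Suc)

lemma fugacity_pos: "fugacity x \<Longrightarrow> 0 < x"
  by (simp add: fugacity_def)

lemma fugacity_le: "fugacity y \<Longrightarrow> 0 < x \<Longrightarrow> x \<le> y \<Longrightarrow> fugacity x"
  unfolding fugacity_def by (auto intro: le_less_trans)

lemma summable_weight_power:
  assumes "\<bar>x\<bar> < f z"
  shows "summable (\<lambda>n. weight n * x ^ n)"
proof (rule summable_ratio_test[where c = "\<bar>x\<bar> / f z" and N = z])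
  have fz: "f z > 0" using assms by linarith
  show "\<bar>x\<bar> / f z < 1" using assms fz by simp
  fix n assume "z \<le> n"
  hence fs: "f z \<le> f (Suc n)" using f_mono by (simp add: monoD)
  have "norm (weight (Suc n) * x ^ Suc n) = (weight n * \<bar>x\<bar> ^ n) * (\<bar>x\<bar> / f (Suc n))"
    using weight_pos[of n] fz fs by (simp add: weight_Suc abs_mult power_abs field_simps)
  also have "\<dots> \<le> (weight n * \<bar>x\<bar> ^ n) * (\<bar>x\<bar> / f z)"
    using fz fs weight_pos[of n] by (intro mult_left_mono divide_left_mono) auto
  also have "\<dots> = \<bar>x\<bar> / f z * norm (weight n * x ^ n)"
    using weight_pos[of n] by (simp add: abs_mult power_abs)
  finally show "norm (weight (Suc n) * x ^ Suc n) \<le> \<bar>x\<bar> / f z * norm (weight n * x ^ n)" .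
qed

lemma summable_moment:
  assumes "\<bar>x\<bar> < f z"
  shows "summable (\<lambda>n. real n ^ k * weight n * x ^ n)"
  using assms
proof (induction k arbitrary: x)
  case 0 then show ?case using summable_weight_power by simp
next
  case (Suc k)
  have "summable (\<lambda>n. diffs (\<lambda>n. real n ^ k * weight n) n * x ^ n)"
    by (rule termdiff_converges[where K = "f z"]) (use Suc in auto)
  hence "summable (\<lambda>n. diffs (\<lambda>n. real n ^ k * weight n) n * x ^ n * x)" by (rule summable_mult2)
  hence "summable (\<lambda>n. real (Suc n) ^ Suc k * weight (Suc n) * x ^ (Suc n))"
    by (simp add: diffs_def algebra_simps)
  thus ?case by (subst summable_Suc_iff[symmetric]) simp
qed

lemma moment_sums:
  assumes "fugacity x"
  shows "(\<lambda>n. real n ^ k * weight n * x ^ n) sums Z k x"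
proof -
  obtain z where "0 < x" "x < f z" using assms by (auto simp: fugacity_def)
  then show ?thesis unfolding Z_def by (intro summable_sums summable_moment[of x z]) auto
qed

lemma moment_term_nonneg: "fugacity x \<Longrightarrow> 0 \<le> real n ^ k * weight n * x ^ n"
  using weight_pos[of n] by (simp add: fugacity_def)

lemma Z_0_ge_1:
  assumes "fugacity x"
  shows "Z 0 x \<ge> 1"
proof -
  have "(\<Sum>n\<in>{0}. real n ^ 0 * weight n * x ^ n) \<le> Z 0 x"
    unfolding Z_def
    by (rule sum_le_suminf[OF sums_summable[OF moment_sums[OF assms]]])
      (use moment_term_nonneg[OF assms, of _ 0] in auto)
  thus ?thesis by (simp add: weight_0)
qed

lemma Z_pos:
  assumes "fugacity x"
  shows "Z k x > 0"
  unfolding Z_def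
  by (rule suminf_pos2[OF sums_summable[OF moment_sums[OF assms]] moment_term_nonneg[OF assms], of 1])
    (use weight_pos assms in \<open>simp add: fugacity_def\<close>)

lemma Z_has_real_derivative:
  assumes "fugacity x"
  shows "DERIV (Z k) x :> Z (Suc k) x / x"
proof -
  obtain z where z: "0 < x" "x < f z" using assms by (auto simp: fugacity_def)
  define c where "c = (\<lambda>n. real n ^ k * weight n)"
  have sums_diffs: "(\<lambda>n. diffs c n * x ^ n) sums (Z (Suc k) x / x)"
  proof -
    have "(\<lambda>n. real (Suc n) ^ Suc k * weight (Suc n) * x ^ Suc n) sums Z (Suc k) x"
      using moment_sums[OF assms, of "Suc k"] by (subst sums_Suc_iff) simp
    hence "(\<lambda>n. (real (Suc n) ^ Suc k * weight (Suc n) * x ^ Suc n) / x) sums (Z (Suc k) x / x)"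
      by (rule sums_divide)
    moreover have "(\<lambda>n. (real (Suc n) ^ Suc k * weight (Suc n) * x ^ Suc n) / x) = (\<lambda>n. diffs c n * x ^ n)"
      using z by (simp add: c_def diffs_def fun_eq_iff)
    ultimately show ?thesis by simp
  qed
  have "summable (\<lambda>n. c n * ((x + f z) / 2) ^ n)"
    using summable_moment[of "(x + f z) / 2" z k] z by (simp add: c_def mult.assoc)
  hence "DERIV (\<lambda>x. \<Sum>n. c n * x ^ n) x :> (\<Sum>n. diffs c n * x ^ n)"
    by (rule termdiffs_strong) (use z in simp)
  moreover have "(\<lambda>x. \<Sum>n. c n * x ^ n) = Z k" by (simp add: Z_def c_def fun_eq_iff)
  ultimately show ?thesis using sums_unique[OF sums_diffs] by simp
qed

lemma Z_012_has_real_derivative: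
  assumes "fugacity x"
  shows "DERIV (Z 0) x :> Z 1 x / x" and "DERIV (Z 1) x :> Z 2 x / x" and "DERIV (Z 2) x :> Z 3 x / x"
  using Z_has_real_derivative[OF assms, of 0] Z_has_real_derivative[OF assms, of 1]
    Z_has_real_derivative[OF assms, of 2]
  by (simp_all add: numeral_2_eq_2 numeral_3_eq_3)

subsection \<open>Stein identity and the orthogonal quadratic\<close>

lemma stein_sums:
  assumes "(\<lambda>n. g (Suc n) * weight n * x ^ n) sums s"
  shows "(\<lambda>n. f n * g n * weight n * x ^ n) sums (x * s)"
proof -
  have "(\<lambda>n. x * (g (Suc n) * weight n * x ^ n)) sums (x * s)" by (rule sums_mult[OF assms])
  moreover have "(\<lambda>n. x * (g (Suc n) * weight n * x ^ n))
      = (\<lambda>n. f (Suc n) * g (Suc n) * weight (Suc n) * x ^ Suc n)"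
    using f_weight_Suc by (simp add: fun_eq_iff algebra_simps)
  ultimately have "(\<lambda>n. f (Suc n) * g (Suc n) * weight (Suc n) * x ^ Suc n) sums (x * s)" by simp
  thus ?thesis by (subst (asm) sums_Suc_iff) (simp add: f_0)
qed

definition density :: "real \<Rightarrow> real" where "density x = Z 1 x / Z 0 x"

definition gram :: "real \<Rightarrow> real" where "gram x = Z 0 x * Z 2 x - (Z 1 x)\<^sup>2"

lemma density_pos: "fugacity x \<Longrightarrow> density x > 0"
  using Z_pos by (simp add: density_def)

text \<open>\<open>gram x / (Z 0 x)\<^sup>2\<close> is the variance of \<open>\<mu>\<^sup>\<theta>\<close>.\<close>

lemma gram_pos:
  assumes x: "fugacity x"
  shows "gram x > 0"
proof -
  define m where "m = density x"
  have "(\<lambda>n. real n ^ 2 * weight n * x ^ n + (- 2 * m) * (real n ^ 1 * weight n * x ^ n)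
          + m\<^sup>2 * (real n ^ 0 * weight n * x ^ n))
        sums (Z 2 x + (- 2 * m) * Z 1 x + m\<^sup>2 * Z 0 x)"
    by (intro sums_add sums_mult moment_sums x)
  moreover have "(\<lambda>n. real n ^ 2 * weight n * x ^ n + (- 2 * m) * (real n ^ 1 * weight n * x ^ n)
          + m\<^sup>2 * (real n ^ 0 * weight n * x ^ n)) = (\<lambda>n. weight n * x ^ n * (real n - m)\<^sup>2)"
    by (simp add: fun_eq_iff power2_eq_square algebra_simps)
  ultimately have var: "(\<lambda>n. weight n * x ^ n * (real n - m)\<^sup>2) sums (Z 2 x + (- 2 * m) * Z 1 x + m\<^sup>2 * Z 0 x)"
    by simp
  have "0 < weight 0 * x ^ 0 * (real 0 - m)\<^sup>2" using density_pos[OF x] by (simp add: m_def weight_0)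
  moreover have "0 \<le> weight n * x ^ n * (real n - m)\<^sup>2" for n
    using weight_pos[of n] fugacity_pos[OF x] by simp
  ultimately have "0 < Z 2 x + (- 2 * m) * Z 1 x + m\<^sup>2 * Z 0 x"
    using suminf_pos2[OF sums_summable[OF var]] sums_unique[OF var] by metis
  hence "0 < Z 0 x * (Z 2 x + (- 2 * m) * Z 1 x + m\<^sup>2 * Z 0 x)" using Z_pos[OF x] by simp
  also have "\<dots> = gram x"
    using Z_pos[OF x, of 0] by (simp add: m_def density_def gram_def power2_eq_square field_simps)
  finally show ?thesis .
qed

text \<open>The coefficients solve \<open>Z 2 + b Z 1 + c Z 0 = 0\<close> and \<open>Z 3 + b Z 2 + c Z 1 = 0\<close> by Cramer's rule, so that
  \<open>ortho_quad x\<close> is the monic quadratic orthogonal to \<open>1\<close> and \<open>n\<close> in \<open>L\<^sup>2(\<mu>)\<close>.\<close>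

definition quad_b :: "real \<Rightarrow> real" where "quad_b x = (Z 1 x * Z 2 x - Z 0 x * Z 3 x) / gram x"

definition quad_c :: "real \<Rightarrow> real" where "quad_c x = (Z 1 x * Z 3 x - (Z 2 x)\<^sup>2) / gram x"

definition ortho_quad :: "real \<Rightarrow> nat \<Rightarrow> real"
  where "ortho_quad x n = real n ^ 2 + quad_b x * real n + quad_c x"

definition f_quad_moment :: "real \<Rightarrow> real"
  where "f_quad_moment x = (\<Sum>n. weight n * x ^ n * f n * ortho_quad x n)"

lemma quad_coeffs_solve:
  assumes "fugacity x"
  shows "Z 2 x + quad_b x * Z 1 x + quad_c x * Z 0 x = 0"
    and "Z 3 x + quad_b x * Z 2 x + quad_c x * Z 1 x = 0"
proof -
  have "gram x \<noteq> 0" using gram_pos[OF assms] by simp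
  then show "Z 2 x + quad_b x * Z 1 x + quad_c x * Z 0 x = 0"
    and "Z 3 x + quad_b x * Z 2 x + quad_c x * Z 1 x = 0"
    unfolding quad_b_def quad_c_def
    by (simp_all add: field_simps) (simp_all add: gram_def power2_eq_square algebra_simps)
qed

lemma ortho_quad_orthogonal_1:
  assumes x: "fugacity x"
  shows "(\<lambda>n. weight n * x ^ n * ortho_quad x n) sums 0"
proof -
  have "(\<lambda>n. real n ^ 2 * weight n * x ^ n + quad_b x * (real n ^ 1 * weight n * x ^ n)
      + quad_c x * (real n ^ 0 * weight n * x ^ n)) sums (Z 2 x + quad_b x * Z 1 x + quad_c x * Z 0 x)"
    by (intro sums_add sums_mult moment_sums x)
  thus ?thesis
    unfolding quad_coeffs_solve(1)[OF x] by (simp add: ortho_quad_def algebra_simps)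
qed

lemma ortho_quad_orthogonal_id:
  assumes x: "fugacity x"
  shows "(\<lambda>n. weight n * x ^ n * real n * ortho_quad x n) sums 0"
proof -
  have "(\<lambda>n. real n ^ 3 * weight n * x ^ n + quad_b x * (real n ^ 2 * weight n * x ^ n)
      + quad_c x * (real n ^ 1 * weight n * x ^ n)) sums (Z 3 x + quad_b x * Z 2 x + quad_c x * Z 1 x)"
    by (intro sums_add sums_mult moment_sums x)
  thus ?thesis
    unfolding quad_coeffs_solve(2)[OF x]
    by (simp add: ortho_quad_def power2_eq_square power3_eq_cube algebra_simps)
qed

text \<open>By Stein's identity \<open>E[f(\<omega>) g(\<omega>)] = x E[g(\<omega> + 1)]\<close> with \<open>g = ortho_quad x\<close>.\<close>

lemma f_quad_moment_sums:
  assumes x: "fugacity x"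
  shows "(\<lambda>n. weight n * x ^ n * f n * ortho_quad x n)
    sums (x * (2 * Z 1 x + Z 0 x + quad_b x * Z 0 x))"
proof -
  have "(\<lambda>n. real n ^ 2 * weight n * x ^ n + (quad_b x + 2) * (real n ^ 1 * weight n * x ^ n)
      + (1 + quad_b x + quad_c x) * (real n ^ 0 * weight n * x ^ n))
      sums (Z 2 x + (quad_b x + 2) * Z 1 x + (1 + quad_b x + quad_c x) * Z 0 x)"
    by (intro sums_add sums_mult moment_sums x)
  also have "Z 2 x + (quad_b x + 2) * Z 1 x + (1 + quad_b x + quad_c x) * Z 0 x
      = 2 * Z 1 x + Z 0 x + quad_b x * Z 0 x"
    using quad_coeffs_solve(1)[OF x] by (simp add: algebra_simps)
  finally have "(\<lambda>n. ortho_quad x (Suc n) * weight n * x ^ n) sums (2 * Z 1 x + Z 0 x + quad_b x * Z 0 x)"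
    by (simp add: ortho_quad_def power2_eq_square algebra_simps)
  from stein_sums[OF this] show ?thesis by (simp add: algebra_simps)
qed

lemma f_quad_moment_eq:
  "fugacity x \<Longrightarrow> f_quad_moment x = x * (2 * Z 1 x + Z 0 x + quad_b x * Z 0 x)"
  unfolding f_quad_moment_def using f_quad_moment_sums by (rule sums_unique[symmetric])

lemma convex_seq_quad_moment:
  assumes x: "fugacity x" and h: "convex_seq h"
    and sh: "summable (\<lambda>n. weight n * x ^ n * h n * ortho_quad x n)"
  shows "0 \<le> (\<Sum>n. weight n * x ^ n * h n * ortho_quad x n)"
    and "(\<Sum>n. weight n * x ^ n * h n * ortho_quad x n) = 0 \<Longrightarrow> linear_seq h"
  using convex_seq_ortho_quadratic[OF h, of "\<lambda>n. weight n * x ^ n" "quad_b x" "quad_c x"]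
    ortho_quad_orthogonal_1[OF x] ortho_quad_orthogonal_id[OF x] sh weight_pos fugacity_pos[OF x]
  by (simp_all add: ortho_quad_def)

lemma f_quad_moment_nonneg: "fugacity x \<Longrightarrow> convex_seq f \<Longrightarrow> 0 \<le> f_quad_moment x"
  using convex_seq_quad_moment(1) f_quad_moment_sums unfolding f_quad_moment_def
  by (blast intro: sums_summable)

lemma f_quad_moment_nonpos:
  assumes x: "fugacity x" and "concave_seq f"
  shows "f_quad_moment x \<le> 0"
proof -
  have "(\<lambda>n. weight n * x ^ n * - f n * ortho_quad x n) sums (- f_quad_moment x)"
    using sums_minus[OF f_quad_moment_sums[OF x]] f_quad_moment_eq[OF x] by simp
  thus ?thesis
    using convex_seq_quad_moment(1)[OF x, of "\<lambda>n. - f n"] assms(2)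
    by (simp add: concave_seq_iff_convex_seq_uminus sums_iff)
qed

lemma f_quad_moment_linear:
  assumes x: "fugacity x" and "linear_seq f"
  shows "f_quad_moment x = 0"
proof -
  obtain a b where ab: "\<And>n. f n = a * real n + b" using assms(2) by (auto simp: linear_seq_def)
  have "(\<lambda>n. a * (weight n * x ^ n * real n * ortho_quad x n) + b * (weight n * x ^ n * ortho_quad x n))
      sums (a * 0 + b * 0)"
    by (intro sums_add sums_mult ortho_quad_orthogonal_1 ortho_quad_orthogonal_id x)
  thus ?thesis unfolding f_quad_moment_def ab by (simp add: sums_iff algebra_simps)
qed

lemma f_quad_moment_eq_0_iff:
  assumes x: "fugacity x" and "convex_seq f \<or> concave_seq f"
  shows "f_quad_moment x = 0 \<longleftrightarrow> linear_seq f"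
proof
  have sf: "summable (\<lambda>n. weight n * x ^ n * f n * ortho_quad x n)"
    using f_quad_moment_sums[OF x] by (rule sums_summable)
  assume zero: "f_quad_moment x = 0"
  show "linear_seq f" using assms(2)
  proof
    assume "convex_seq f"
    thus ?thesis using convex_seq_quad_moment(2)[OF x _ sf] zero by (simp add: f_quad_moment_def)
  next
    assume "concave_seq f"
    hence "linear_seq (\<lambda>n. - f n)"
      using convex_seq_quad_moment(2)[OF x, of "\<lambda>n. - f n"] summable_minus[OF sf] zero
      by (simp add: concave_seq_iff_convex_seq_uminus f_quad_moment_def suminf_minus[OF sf])
    thus ?thesis using linear_seq_uminus[of "\<lambda>n. - f n"] by simp
  qed
qed (rule f_quad_moment_linear[OF x])

lemma density_has_real_derivative:
  assumes x: "fugacity x"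
  shows "DERIV density x :> gram x / (x * (Z 0 x)\<^sup>2)"
proof -
  have "DERIV (\<lambda>x. Z 1 x / Z 0 x) x :> (Z 2 x / x * Z 0 x - Z 1 x * (Z 1 x / x)) / (Z 0 x * Z 0 x)"
    using Z_pos[OF x, of 0] by (intro DERIV_divide Z_012_has_real_derivative[OF x]) auto
  moreover have "(Z 2 x / x * Z 0 x - Z 1 x * (Z 1 x / x)) / (Z 0 x * Z 0 x) = gram x / (x * (Z 0 x)\<^sup>2)"
    using fugacity_pos[OF x] Z_pos[OF x, of 0] by (simp add: gram_def power2_eq_square field_simps)
  ultimately show ?thesis unfolding density_def[abs_def] by simp
qed

lemma gram_has_real_derivative:
  assumes x: "fugacity x"
  shows "DERIV gram x :> (Z 0 x * Z 3 x - Z 1 x * Z 2 x) / x"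
proof -
  have "DERIV (\<lambda>x. Z 0 x * Z 2 x - (Z 1 x)\<^sup>2) x :>
      (Z 1 x / x * Z 2 x + Z 3 x / x * Z 0 x) - of_nat 2 * (Z 2 x / x * Z 1 x ^ (2 - Suc 0))"
    by (intro DERIV_diff DERIV_mult DERIV_power Z_012_has_real_derivative[OF x])
  moreover have "(Z 1 x / x * Z 2 x + Z 3 x / x * Z 0 x) - of_nat 2 * (Z 2 x / x * Z 1 x ^ (2 - Suc 0))
      = (Z 0 x * Z 3 x - Z 1 x * Z 2 x) / x"
    using fugacity_pos[OF x] by (simp add: field_simps)
  ultimately show ?thesis unfolding gram_def[abs_def] by simp
qed

text \<open>\<open>dflux\<close> and \<open>d2flux\<close> are the first and second derivatives of the flux, expressed in the
  fugacity \<open>x = flux \<rho>\<close>.\<close>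

definition dflux :: "real \<Rightarrow> real" where "dflux x = x * (Z 0 x)\<^sup>2 / gram x"

definition d2flux :: "real \<Rightarrow> real" where "d2flux x = (Z 0 x) ^ 3 * f_quad_moment x / (gram x)\<^sup>2"

lemma dflux_eq_inverse: "dflux x = inverse (gram x / (x * (Z 0 x)\<^sup>2))"
  by (simp add: dflux_def)

lemma dflux_has_real_derivative:
  assumes x: "fugacity x"
  shows "DERIV dflux x :> Z 0 x * f_quad_moment x / (x * gram x)"
proof -
  have D: "gram x \<noteq> 0" using gram_pos[OF x] by simp
  have "DERIV (\<lambda>x. x * (Z 0 x)\<^sup>2 / gram x) x :>
      ((1 * (Z 0 x)\<^sup>2 + of_nat 2 * (Z 1 x / x * Z 0 x ^ (2 - Suc 0)) * x) * gram x
        - x * (Z 0 x)\<^sup>2 * ((Z 0 x * Z 3 x - Z 1 x * Z 2 x) / x)) / (gram x * gram x)"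
    by (intro DERIV_divide DERIV_mult DERIV_power DERIV_ident Z_012_has_real_derivative[OF x]
        gram_has_real_derivative[OF x] D)
  moreover have "((1 * (Z 0 x)\<^sup>2 + of_nat 2 * (Z 1 x / x * Z 0 x ^ (2 - Suc 0)) * x) * gram x
        - x * (Z 0 x)\<^sup>2 * ((Z 0 x * Z 3 x - Z 1 x * Z 2 x) / x)) / (gram x * gram x)
      = Z 0 x * f_quad_moment x / (x * gram x)"
    using fugacity_pos[OF x] D
    by (simp add: f_quad_moment_eq[OF x] quad_b_def field_simps)
      (simp add: gram_def power2_eq_square algebra_simps)
  ultimately show ?thesis unfolding dflux_def[abs_def] by simp
qed

lemma sgn_d2flux: "fugacity x \<Longrightarrow> sgn (d2flux x) = sgn (f_quad_moment x)"
  using Z_pos[of x 0] gram_pos[of x] by (simp add: d2flux_def sgn_mult)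

section \<open>The density is a bijection onto the positive reals\<close>

lemma density_strict_mono:
  assumes "fugacity x" "fugacity y" "x < y"
  shows "density x < density y"
proof (rule DERIV_pos_imp_increasing[OF assms(3)])
  fix t assume "x \<le> t" "t \<le> y"
  hence t: "fugacity t" using fugacity_le[OF assms(2)] fugacity_pos[OF assms(1)] by simp
  have "gram t / (t * (Z 0 t)\<^sup>2) > 0"
    using gram_pos[OF t] Z_pos[OF t, of 0] fugacity_pos[OF t] by (simp add: zero_less_mult_iff)
  thus "\<exists>d. DERIV density t :> d \<and> d > 0" using density_has_real_derivative[OF t] by blast
qed

lemma density_inj: "fugacity x \<Longrightarrow> fugacity y \<Longrightarrow> density x = density y \<Longrightarrow> x = y"
  by (metis density_strict_mono less_irrefl linorder_neqE_linordered_idom)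

lemma isCont_density: "fugacity x \<Longrightarrow> isCont density x"
  using density_has_real_derivative DERIV_isCont by blast

lemma Z_1_le_linear:
  assumes "0 < x" "x \<le> x0" "fugacity x0"
  shows "Z 1 x \<le> x / x0 * Z 1 x0"
proof -
  have x: "fugacity x" using fugacity_le assms by blast
  have x0: "0 < x0" using assms by simp
  have le: "real n ^ 1 * weight n * x ^ n \<le> x / x0 * (real n ^ 1 * weight n * x0 ^ n)" for n
  proof (cases n)
    case (Suc k)
    have "x ^ k \<le> x0 ^ k" using assms by (intro power_mono) auto
    hence "x * (real n * weight n * x ^ k) \<le> x * (real n * weight n * x0 ^ k)"
      using weight_pos[of n] assms by (intro mult_left_mono) auto
    moreover have "real n ^ 1 * weight n * x ^ n = x * (real n * weight n * x ^ k)" using Suc by simp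
    moreover have "x / x0 * (real n ^ 1 * weight n * x0 ^ n) = x * (real n * weight n * x0 ^ k)"
      using Suc x0 by (simp add: field_simps)
    ultimately show ?thesis by metis
  qed simp
  have "Z 1 x \<le> (\<Sum>n. x / x0 * (real n ^ 1 * weight n * x0 ^ n))"
    unfolding Z_def
    by (rule suminf_le[OF le sums_summable[OF moment_sums[OF x]]
          summable_mult[OF sums_summable[OF moment_sums[OF assms(3)]]]])
  also have "\<dots> = x / x0 * Z 1 x0"
    unfolding Z_def by (rule suminf_mult[OF sums_summable[OF moment_sums[OF assms(3)]]])
  finally show ?thesis .
qed

lemma density_small:
  assumes "\<rho> > 0"
  obtains x where "fugacity x" "density x < \<rho>"
proof -
  define x0 where "x0 = f 1 / 2"
  have x0: "fugacity x0" using f_pos[of 1] by (auto simp: x0_def fugacity_def intro!: exI[of _ 1])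
  have Z1: "Z 1 x0 > 0" using Z_pos[OF x0] .
  define x where "x = min x0 (\<rho> * x0 / (2 * Z 1 x0))"
  have x: "0 < x" "x \<le> x0" using fugacity_pos[OF x0] Z1 assms by (auto simp: x_def)
  hence fx: "fugacity x" using fugacity_le[OF x0] by simp
  have "density x \<le> Z 1 x"
    using Z_0_ge_1[OF fx] Z_pos[OF fx, of 1] by (simp add: density_def divide_le_eq mult_le_cancel_left1)
  also have "\<dots> \<le> x / x0 * Z 1 x0" using Z_1_le_linear[OF x x0] .
  also have "\<dots> \<le> (\<rho> * x0 / (2 * Z 1 x0)) / x0 * Z 1 x0"
    using fugacity_pos[OF x0] Z1 by (intro mult_right_mono divide_right_mono) (auto simp: x_def)
  also have "\<dots> = \<rho> / 2" using fugacity_pos[OF x0] Z1 by (simp add: field_simps)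
  finally show ?thesis using that fx assms by simp
qed

lemma density_ge_half:
  assumes x: "fugacity x" and half: "2 * (\<Sum>n<N. weight n * x ^ n) \<le> Z 0 x"
  shows "real N / 2 \<le> density x"
proof -
  have lhs: "(\<lambda>n. real N * (real n ^ 0 * weight n * x ^ n)
        - real N * (if n \<in> {..<N} then weight n * x ^ n else 0))
      sums (real N * Z 0 x - real N * (\<Sum>n\<in>{..<N}. weight n * x ^ n))"
    by (intro sums_diff sums_mult moment_sums[OF x] sums_If_finite_set) auto
  have le: "real N * (real n ^ 0 * weight n * x ^ n)
      - real N * (if n \<in> {..<N} then weight n * x ^ n else 0) \<le> real n ^ 1 * weight n * x ^ n" for n
  proof (cases "n < N")
    case False
    hence "real N * (weight n * x ^ n) \<le> real n * (weight n * x ^ n)"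
      using moment_term_nonneg[OF x, of n 0] by (intro mult_right_mono) auto
    thus ?thesis using False by simp
  qed (use moment_term_nonneg[OF x, of n 1] in simp)
  have "real N * (Z 0 x - (\<Sum>n<N. weight n * x ^ n)) \<le> Z 1 x"
    using sums_le[OF le lhs moment_sums[OF x, of 1]] by (simp add: right_diff_distrib)
  moreover have "real N * (Z 0 x / 2) \<le> real N * (Z 0 x - (\<Sum>n<N. weight n * x ^ n))"
    using half by (intro mult_left_mono) auto
  ultimately show ?thesis using Z_pos[OF x, of 0] by (simp add: density_def field_simps)
qed

lemma density_large_if_unbounded:
  assumes unb: "\<And>M. \<exists>z. M < f z"
  obtains x where "fugacity x" "real N / 2 \<le> density x"
proof -
  define C where "C = (\<Sum>n<N. weight n)"
  have C: "C \<ge> 0" unfolding C_def by (intro sum_nonneg) (simp add: less_imp_le[OF weight_pos])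
  define x where "x = 1 + 2 * C / weight N"
  have x1: "x \<ge> 1" using C weight_pos[of N] by (simp add: x_def)
  obtain z where "x < f z" using unb by blast
  hence fx: "fugacity x" using x1 by (auto simp: fugacity_def)
  have "(\<Sum>n<N. weight n * x ^ n) \<le> (\<Sum>n<N. weight n * x ^ (N - 1))"
    by (intro sum_mono mult_left_mono power_increasing) (use x1 weight_pos in \<open>auto simp: less_imp_le\<close>)
  also have "\<dots> = C * x ^ (N - 1)" by (simp add: C_def sum_distrib_right)
  finally have init: "(\<Sum>n<N. weight n * x ^ n) \<le> C * x ^ (N - 1)" .
  have "(\<Sum>n\<in>{N}. real n ^ 0 * weight n * x ^ n) \<le> Z 0 x"
    unfolding Z_def
    by (rule sum_le_suminf[OF sums_summable[OF moment_sums[OF fx]]]) (use moment_term_nonneg[OF fx, of _ 0] in auto)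
  hence tail: "weight N * x ^ N \<le> Z 0 x" by simp
  show ?thesis
  proof (cases "N = 0")
    case False
    have "2 * C \<le> weight N * x" using weight_pos[of N] C by (simp add: x_def field_simps)
    hence "2 * C * x ^ (N - 1) \<le> weight N * x * x ^ (N - 1)" using x1 by (intro mult_right_mono) auto
    also have "weight N * x * x ^ (N - 1) = weight N * x ^ N" using False by (simp add: power_eq_if)
    finally have "2 * (\<Sum>n<N. weight n * x ^ n) \<le> Z 0 x" using init tail by linarith
    thus ?thesis using that fx density_ge_half by blast
  qed (use that fx density_pos in \<open>auto intro: less_imp_le\<close>)
qed

lemma weight_power_ge_1:
  assumes "\<And>z. f z \<le> L"
  shows "1 \<le> weight n * L ^ n"
proof -
  have "ffact f n \<le> (\<Prod>y\<in>{1..n}. L)" unfolding ffact_def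
    by (rule prod_mono) (use assms f_nonneg in auto)
  thus ?thesis using ffact_pos[of n] by (simp add: weight_def field_simps)
qed

lemma density_large_if_bounded:
  assumes bdd: "\<And>z. f z \<le> M"
  obtains x where "fugacity x" "real N / 2 \<le> density x"
proof -
  define L where "L = Sup (range f)"
  have bA: "bdd_above (range f)" using bdd by (auto intro!: bdd_aboveI[of _ M])
  have fL: "f z \<le> L" for z unfolding L_def by (rule cSup_upper[OF _ bA]) simp
  have "0 < L" using fL[of 1] f_pos[of 1] by simp
  have fug_L: "fugacity x" if "0 < x" "x < L" for x
    using that less_cSup_iff[OF _ bA] unfolding L_def fugacity_def by auto
  define K where "K = nat \<lceil>4 * (\<Sum>n<N. weight n * L ^ n)\<rceil> + 1"
  have K: "K \<ge> 1" "real K \<ge> 4 * (\<Sum>n<N. weight n * L ^ n)" unfolding K_def by linarith+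
  define t where "t = 1 - 1 / (2 * real K)"
  have t: "t \<ge> 1/2" "t < 1" using K by (auto simp: t_def field_simps)
  define x where "x = L * t"
  have x: "0 < x" "x < L" using \<open>0 < L\<close> t by (auto simp: x_def)
  have fx: "fugacity x" by (rule fug_L[OF x])
  have init: "(\<Sum>n<N. weight n * x ^ n) \<le> (\<Sum>n<N. weight n * L ^ n)"
    by (intro sum_mono mult_left_mono power_mono) (use x weight_pos in \<open>auto simp: less_imp_le\<close>)
  have half: "weight n * x ^ n \<ge> 1/2" if "n < K" for n
  proof -
    have "1 + real n * (- 1 / (2 * real K)) \<le> (1 + (- 1 / (2 * real K))) ^ n"
      by (rule Bernoulli_inequality) (use K in \<open>simp add: field_simps\<close>)
    moreover have "real n * (1 / (2 * real K)) \<le> 1/2" using that K by (simp add: field_simps)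
    ultimately have "t ^ n \<ge> 1/2" by (simp add: t_def)
    hence "1 * (1/2) \<le> (weight n * L ^ n) * t ^ n" using weight_power_ge_1[OF fL, of n] by (intro mult_mono) auto
    thus ?thesis by (simp add: x_def power_mult_distrib)
  qed
  have "real K / 2 \<le> (\<Sum>n<K. real n ^ 0 * weight n * x ^ n)"
    using sum_mono[of "{..<K}" "\<lambda>_. 1/2::real"] half by simp
  also have "\<dots> \<le> Z 0 x"
    unfolding Z_def
    by (rule sum_le_suminf[OF sums_summable[OF moment_sums[OF fx]]]) (use moment_term_nonneg[OF fx, of _ 0] in auto)
  finally have "2 * (\<Sum>n<N. weight n * x ^ n) \<le> Z 0 x" using init K by linarith
  thus ?thesis using that fx density_ge_half by blast
qed

lemma density_large:
  obtains x where "fugacity x" "real N / 2 \<le> density x"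
proof (cases "\<exists>M. \<forall>z. f z \<le> M")
  case True
  then obtain M where "\<And>z. f z \<le> M" by blast
  then show ?thesis using density_large_if_bounded that by blast
next
  case False
  hence "\<And>M. \<exists>z. M < f z" by (auto simp: not_le)
  then show ?thesis using density_large_if_unbounded that by blast
qed

lemma density_surj:
  assumes "\<rho> > 0"
  obtains x where "fugacity x" "density x = \<rho>"
proof -
  obtain x1 where x1: "fugacity x1" "density x1 < \<rho>" using density_small[OF assms] by blast
  obtain x2 where "fugacity x2" "real (nat \<lceil>2 * \<rho>\<rceil> + 1) / 2 \<le> density x2"
    using density_large by blast
  moreover have "\<rho> < real (nat \<lceil>2 * \<rho>\<rceil> + 1) / 2" using real_nat_ceiling_ge[of "2 * \<rho>"] by simp
  ultimately have x2: "fugacity x2" "\<rho> < density x2" by auto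
  have "x1 \<le> x2" using density_strict_mono[OF x2(1) x1(1)] x1(2) x2(2) by force
  have fug: "fugacity t" if "x1 \<le> t" "t \<le> x2" for t
    using fugacity_le[OF x2(1)] fugacity_pos[OF x1(1)] that by simp
  have "continuous_on {x1..x2} density"
    using fug isCont_density by (intro continuous_at_imp_continuous_on) auto
  then obtain x where "x1 \<le> x" "x \<le> x2" "density x = \<rho>"
    using IVT'[of density x1 \<rho> x2] x1(2) x2(2) \<open>x1 \<le> x2\<close> by auto
  thus ?thesis using that fug by blast
qed

section \<open>The flux as the inverse of the density\<close>

lemma theta_bar_eq_SUP: "theta_bar f = (SUP i. ereal (ln (f (Suc i))))"
proof -
  have "incseq (\<lambda>i. ereal (ln (f (Suc i))))"
  proof (rule incseq_SucI)
    fix i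
    have "f (Suc i) \<le> f (Suc (Suc i))" using f_mono by (simp add: monoD)
    thus "ereal (ln (f (Suc i))) \<le> ereal (ln (f (Suc (Suc i))))" using f_pos[of "Suc i"] by simp
  qed
  hence "(\<lambda>z. ereal (ln (f z))) \<longlonglongrightarrow> (SUP i. ereal (ln (f (Suc i))))"
    by (rule LIMSEQ_imp_Suc[OF LIMSEQ_SUP])
  thus ?thesis unfolding theta_bar_def by (rule limI)
qed

lemma theta_bar_gt_iff: "ereal \<theta> < theta_bar f \<longleftrightarrow> fugacity (exp \<theta>)"
proof -
  have "ereal \<theta> < ereal (ln (f (Suc i))) \<longleftrightarrow> exp \<theta> < f (Suc i)" for i
    using ln_less_cancel_iff[of "exp \<theta>" "f (Suc i)"] f_pos[of "Suc i"] by simp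
  hence "ereal \<theta> < theta_bar f \<longleftrightarrow> (\<exists>i. exp \<theta> < f (Suc i))"
    by (simp add: theta_bar_eq_SUP less_SUP_iff)
  also have "\<dots> \<longleftrightarrow> (\<exists>z. exp \<theta> < f z)"
    using f_0 by (metis exp_gt_zero less_asym not0_implies_Suc)
  finally show ?thesis by (simp add: fugacity_def)
qed

lemma mu_eq: "mu f \<theta> n = weight n * exp \<theta> ^ n / Z 0 (exp \<theta>)"
  by (simp add: mu_def Zpart_def Z_def weight_def exp_of_nat_mult[symmetric] mult.commute)

lemma rho_eq_density:
  assumes "fugacity (exp \<theta>)"
  shows "rho f \<theta> = density (exp \<theta>)"
proof -
  have "(\<lambda>n. real n ^ 1 * weight n * exp \<theta> ^ n / Z 0 (exp \<theta>)) sums density (exp \<theta>)"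
    unfolding density_def by (rule sums_divide[OF moment_sums[OF assms]])
  thus ?thesis unfolding rho_def mu_eq by (simp add: sums_iff mult.assoc)
qed

lemma theta_of_density: "fugacity x \<Longrightarrow> theta_of f (density x) = ln x"
  unfolding theta_of_def
proof (rule the_equality)
  assume x: "fugacity x"
  thus "ereal (ln x) < theta_bar f \<and> rho f (ln x) = density x"
    using fugacity_pos[OF x] by (simp add: theta_bar_gt_iff rho_eq_density)
  fix \<theta> assume "ereal \<theta> < theta_bar f \<and> rho f \<theta> = density x"
  thus "\<theta> = ln x"
    using density_inj[OF _ x] by (metis theta_bar_gt_iff rho_eq_density ln_exp)
qed

text \<open>Stein's identity with \<open>g = 1\<close> gives \<open>E[f(\<omega>)] = x\<close>: the flux is the inverse of the density.\<close>

lemma flux_density: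
  assumes x: "fugacity x"
  shows "flux f (density x) = x"
proof -
  have "(\<lambda>n. f n * 1 * weight n * x ^ n) sums (x * Z 0 x)"
    using stein_sums[of "\<lambda>_. 1"] moment_sums[OF x, of 0] by simp
  from sums_divide[OF this, of "Z 0 x"]
  have "(\<lambda>n. f n * (weight n * x ^ n / Z 0 x)) sums x"
    using Z_pos[OF x, of 0] by (simp add: mult.assoc)
  thus ?thesis
    using fugacity_pos[OF x] by (simp add: flux_def theta_of_density[OF x] mu_eq sums_iff)
qed

lemma flux_fugacity:
  assumes "\<rho> > 0"
  shows "fugacity (flux f \<rho>)" and "density (flux f \<rho>) = \<rho>"
  using density_surj[OF assms] flux_density by metis+

section \<open>Derivatives of the flux\<close>

lemma isCont_flux:
  assumes "\<rho> > 0"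
  shows "isCont (flux f) \<rho>"
proof -
  define x where "x = flux f \<rho>"
  obtain z where x: "0 < x" "x < f z" using flux_fugacity(1)[OF assms] by (auto simp: x_def fugacity_def)
  define d where "d = min x (f z - x) / 2"
  have d: "0 < d" using x by (simp add: d_def)
  have fug: "fugacity t" if "\<bar>t - x\<bar> \<le> d" for t
  proof -
    have "t - x \<le> d" "x - t \<le> d" using that by (auto simp: abs_le_iff)
    moreover have "2 * d \<le> x" "2 * d \<le> f z - x" by (auto simp: d_def)
    ultimately show ?thesis using x unfolding fugacity_def by (intro conjI exI[of _ z]) linarith+
  qed
  have "isCont (flux f) (density x)"
    using isCont_inverse_function[OF d, where f = density and g = "flux f" and x = x]
      fug flux_density isCont_density by blast
  thus ?thesis using flux_fugacity(2)[OF assms] by (simp add: x_def)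
qed

lemma flux_has_real_derivative:
  assumes "\<rho> > 0"
  shows "DERIV (flux f) \<rho> :> dflux (flux f \<rho>)"
proof -
  define x where "x = flux f \<rho>"
  have x: "fugacity x" using flux_fugacity(1)[OF assms] by (simp add: x_def)
  have "gram x / (x * (Z 0 x)\<^sup>2) \<noteq> 0"
    using gram_pos[OF x] Z_pos[OF x, of 0] fugacity_pos[OF x] by simp
  hence "DERIV (flux f) \<rho> :> inverse (gram x / (x * (Z 0 x)\<^sup>2))"
    using density_has_real_derivative[OF x] flux_fugacity(2) isCont_flux assms
    by (intro DERIV_inverse_function[where a = 0 and b = "\<rho> + 1"]) (auto simp: x_def)
  thus ?thesis by (simp add: dflux_eq_inverse x_def)
qed

lemma dflux_flux_has_real_derivative:
  assumes "\<rho> > 0"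
  shows "DERIV (\<lambda>\<rho>. dflux (flux f \<rho>)) \<rho> :> d2flux (flux f \<rho>)"
proof -
  define x where "x = flux f \<rho>"
  have x: "fugacity x" using flux_fugacity(1)[OF assms] by (simp add: x_def)
  have "DERIV (\<lambda>\<rho>. dflux (flux f \<rho>)) \<rho> :> Z 0 x * f_quad_moment x / (x * gram x) * dflux x"
    using DERIV_chain2[OF dflux_has_real_derivative[OF x[unfolded x_def]]
        flux_has_real_derivative[OF assms]]
    by (simp add: x_def)
  moreover have "Z 0 x * f_quad_moment x / (x * gram x) * dflux x = d2flux x"
    using fugacity_pos[OF x] by (simp add: dflux_def d2flux_def power2_eq_square power3_eq_cube)
  ultimately show ?thesis by (simp add: x_def)
qed

lemma deriv2_flux:
  assumes "\<rho> > 0"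
  shows "deriv (deriv (flux f)) \<rho> = d2flux (flux f \<rho>)"
proof -
  have "\<forall>\<^sub>F \<sigma> in nhds \<rho>. deriv (flux f) \<sigma> = dflux (flux f \<sigma>)"
    using eventually_nhds_in_open[of "{0<..}" \<rho>] assms
    by (auto elim!: eventually_mono intro: DERIV_imp_deriv flux_has_real_derivative)
  hence "deriv (deriv (flux f)) \<rho> = deriv (\<lambda>\<sigma>. dflux (flux f \<sigma>)) \<rho>"
    by (rule deriv_cong_ev) simp
  thus ?thesis using DERIV_imp_deriv[OF dflux_flux_has_real_derivative[OF assms]] by simp
qed

lemma sgn_deriv2_flux:
  "\<rho> > 0 \<Longrightarrow> sgn (deriv (deriv (flux f)) \<rho>) = sgn (f_quad_moment (flux f \<rho>))"
  using deriv2_flux sgn_d2flux flux_fugacity(1) by simp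

lemma deriv2_flux_pos_iff:
  assumes f: "convex_seq f" and \<rho>: "\<rho> > 0"
  shows "deriv (deriv (flux f)) \<rho> > 0 \<longleftrightarrow> \<not> linear_seq f"
proof -
  have x: "fugacity (flux f \<rho>)" by (rule flux_fugacity(1)[OF \<rho>])
  have "deriv (deriv (flux f)) \<rho> > 0 \<longleftrightarrow> f_quad_moment (flux f \<rho>) > 0"
    using sgn_deriv2_flux[OF \<rho>] sgn_greater by metis
  also have "\<dots> \<longleftrightarrow> \<not> linear_seq f"
    using f_quad_moment_nonneg[OF x f] f_quad_moment_eq_0_iff[OF x] f by auto
  finally show ?thesis .
qed

lemma deriv2_flux_neg_iff:
  assumes f: "concave_seq f" and \<rho>: "\<rho> > 0"
  shows "deriv (deriv (flux f)) \<rho> < 0 \<longleftrightarrow> \<not> linear_seq f"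
proof -
  have x: "fugacity (flux f \<rho>)" by (rule flux_fugacity(1)[OF \<rho>])
  have "deriv (deriv (flux f)) \<rho> < 0 \<longleftrightarrow> f_quad_moment (flux f \<rho>) < 0"
    using sgn_deriv2_flux[OF \<rho>] sgn_less by metis
  also have "\<dots> \<longleftrightarrow> \<not> linear_seq f"
    using f_quad_moment_nonpos[OF x f] f_quad_moment_eq_0_iff[OF x] f by auto
  finally show ?thesis .
qed

lemma convex_on_flux:
  assumes "convex_seq f"
  shows "convex_on {0<..} (flux f)"
proof (rule f''_ge0_imp_convex)
  fix \<rho> :: real assume "\<rho> \<in> {0<..}"
  hence \<rho>: "\<rho> > 0" by simp
  show "DERIV (flux f) \<rho> :> dflux (flux f \<rho>)" by (rule flux_has_real_derivative[OF \<rho>])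
  show "DERIV (\<lambda>\<rho>. dflux (flux f \<rho>)) \<rho> :> d2flux (flux f \<rho>)"
    by (rule dflux_flux_has_real_derivative[OF \<rho>])
  show "0 \<le> d2flux (flux f \<rho>)"
    using sgn_d2flux f_quad_moment_nonneg[OF _ assms] flux_fugacity(1)[OF \<rho>]
    by (metis zero_le_sgn_iff)
qed simp

lemma concave_on_flux:
  assumes "concave_seq f"
  shows "concave_on {0<..} (flux f)"
proof (rule f''_le0_imp_concave)
  fix \<rho> :: real assume "\<rho> \<in> {0<..}"
  hence \<rho>: "\<rho> > 0" by simp
  show "DERIV (flux f) \<rho> :> dflux (flux f \<rho>)" by (rule flux_has_real_derivative[OF \<rho>])
  show "DERIV (\<lambda>\<rho>. dflux (flux f \<rho>)) \<rho> :> d2flux (flux f \<rho>)"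
    by (rule dflux_flux_has_real_derivative[OF \<rho>])
  show "d2flux (flux f \<rho>) \<le> 0"
    using sgn_d2flux f_quad_moment_nonpos[OF _ assms] flux_fugacity(1)[OF \<rho>]
    by (metis sgn_le_0_iff)
qed simp

end

theorem propositionC1:
  fixes f :: "nat \<Rightarrow> real"
  assumes "mono f" and "f 0 = 0" and "\<And>z. z > 0 \<Longrightarrow> f z > 0"
  shows "(convex_seq f \<longrightarrow>
            convex_on {0<..} (flux f) \<and>
            ((\<forall>\<rho>>0. deriv (deriv (flux f)) \<rho> > 0) \<longleftrightarrow> \<not> linear_seq f))
       \<and> (concave_seq f \<longrightarrow>
            concave_on {0<..} (flux f) \<and>
            ((\<forall>\<rho>>0. deriv (deriv (flux f)) \<rho> < 0) \<longleftrightarrow> \<not> linear_seq f))"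
proof -
  interpret zero_range_rate f using assms by unfold_locales
  have all_pos: "(\<forall>\<rho>>0. P \<rho>) \<longleftrightarrow> Q"
    if "\<And>\<rho>. \<rho> > 0 \<Longrightarrow> P \<rho> \<longleftrightarrow> Q" for P :: "real \<Rightarrow> bool" and Q
    using that zero_less_one by blast
  show ?thesis
  proof (intro conjI impI)
    assume f: "convex_seq f"
    show "convex_on {0<..} (flux f)" using convex_on_flux[OF f] .
    show "(\<forall>\<rho>>0. deriv (deriv (flux f)) \<rho> > 0) \<longleftrightarrow> \<not> linear_seq f"
      using all_pos deriv2_flux_pos_iff[OF f] by blast
  next
    assume f: "concave_seq f"
    show "concave_on {0<..} (flux f)" using concave_on_flux[OF f] .
    show "(\<forall>\<rho>>0. deriv (deriv (flux f)) \<rho> < 0) \<longleftrightarrow> \<not> linear_seq f"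
      using all_pos deriv2_flux_neg_iff[OF f] by blast
  qed
qed

end
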